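(* Let $(\bm M_s)$ and $(\tilde{\bm M}_s)$ be sequences of parameters with $\bm M_s,\tilde{\bm M}_s\in\mathcal M$ for all $s$. Then for every $t$, $$\max_{1\le i\le k_x}\big|g^x_i(\bm M_{t-H:t-1})-g^x_i(\tilde{\bm M}_{t-H:t-1})\big|\le L_g(H)\sum_{k=1}^H(1-\gamma)^{k-1}\|\bm M_{t-k}-\tilde{\bm M}_{t-k}\|_F,$$ $$\max_{1\le j\le k_u}\big|g^u_j(\bm M_{t-H:t})-g^u_j(\tilde{\bm M}_{t-H:t})\big|\le L_g(H)\sum_{k=0}^H(1-\gamma)^{\max(k-1,0)}\|\bm M_{t-k}-\tilde{\bm M}_{t-k}\|_F,$$ where $L_g(H)=\bar w\sqrt n\max(\|D_x\|_\infty,\|D_u\|_\infty)\kappa^3\kappa_B\sqrt H$.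
   Context: $A\in\mathbb R^{n\times n}$, $B\in\mathbb R^{n\times m}$, $\bar w>0$, $D_x\in\mathbb R^{k_x\times n}$, $D_u\in\mathbb R^{k_u\times m}$ with rows $D_{x,i}^\top$, $D_{u,j}^\top$; matrix $\|\cdot\|_\infty$ = max absolute row sum, $\|\cdot\|_2$ spectral norm, $\|\cdot\|_1$ vector 1-norm. For $\kappa\ge1$, $\gamma\in(0,1]$, $K$ is $(\kappa,\gamma)$-strongly stable if $A-BK=Q^{-1}LQ$ with $\|L\|_2\le1-\gamma$ and $\max(\|Q\|_2,\|Q^{-1}\|_2,\|K\|_2)\le\kappa$; $\kappa_B=\max(\|B\|_2,1)$. Fix $(\kappa,\gamma)$-strongly stable $\mathbb K$, $A_{\mathbb K}=A-B\mathbb K$, $H\ge1$. Parameters $\bm M=(M^{[1]},\dots,M^{[H]})$, $M^{[i]}\in\mathbb R^{m\times n}$, with $\|\bm M\|_F=(\sum_i\|M^{[i]}\|_F^2)^{1/2}$; $\mathcal M=\{\bm M:\|M^{[i]}\|_\infty\le2\sqrt n\kappa^3(1-\gamma)^{i-1}\}$. $\Phi^x_k(\bm M_{t-H:t-1})=A_{\mathbb K}^{k-1}\mathds1_{(k\le H)}+\sum_{i=1}^HA_{\mathbb K}^{i-1}BM_{t-i}^{[k-i]}\mathds1_{(1\le k-i\le H)}$, $\Phi^u_k(\bm M_{t-H:t})=M_t^{[k]}\mathds1_{(k\le H)}-\mathbb K\Phi^x_k(\bm M_{t-H:t-1})$ for $k=1,\dots,2H$. $g^x_i(\bm M_{t-H:t-1})=\bar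 w\sum_{k=1}^{2H}\|D_{x,i}^\top\Phi^x_k(\bm M_{t-H:t-1})\|_1$ and $g^u_j(\bm M_{t-H:t})=\bar w\sum_{k=1}^{2H}\|D_{u,j}^\top\Phi^u_k(\bm M_{t-H:t})\|_1$. *)

theory Defs
  imports "HOL-Analysis.Analysis"
begin

text \<open>Matrices are rendered as \<open>real^'c^'r\<close> (rows indexed by 'r, columns by 'c);
  dimensions n, m, k_x, k_u are the cardinalities of finite index types.\<close>

definition matpow :: "real^'n^'n \<Rightarrow> nat \<Rightarrow> real^'n^'n" where
  "matpow A k = (((**) A) ^^ k) (mat 1)"

definition specnorm :: "real^'c^'r \<Rightarrow> real" where
  "specnorm A = onorm (\<lambda>x. A *v x)"

definition inftynorm :: "real^'c^'r \<Rightarrow> real" where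
  "inftynorm A = Max (range (\<lambda>i. \<Sum>j\<in>UNIV. \<bar>A $ i $ j\<bar>))"

definition frobnorm :: "real^'c^'r \<Rightarrow> real" where
  "frobnorm A = sqrt (\<Sum>i\<in>UNIV. \<Sum>j\<in>UNIV. (A $ i $ j)^2)"

definition norm1 :: "real^'c \<Rightarrow> real" where
  "norm1 v = (\<Sum>j\<in>UNIV. \<bar>v $ j\<bar>)"

definition paramnorm :: "nat \<Rightarrow> (nat \<Rightarrow> real^'n^'m) \<Rightarrow> real" where
  "paramnorm H M = sqrt (\<Sum>i=1..H. (frobnorm (M i))^2)"

definition strongly_stable ::
  "real^'n^'n \<Rightarrow> real^'m^'n \<Rightarrow> real \<Rightarrow> real \<Rightarrow> real^'n^'m \<Rightarrow> bool" where
  "strongly_stable A B \<kappa> \<gamma> K \<longleftrightarrow>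
     (\<exists>Q L :: real^'n^'n. invertible Q \<and> A - B ** K = matrix_inv Q ** L ** Q \<and>
        specnorm L \<le> 1 - \<gamma> \<and> specnorm Q \<le> \<kappa> \<and> specnorm (matrix_inv Q) \<le> \<kappa> \<and>
        specnorm K \<le> \<kappa>)"

definition kappaB :: "real^'m^'n \<Rightarrow> real" where
  "kappaB B = max (specnorm B) 1"

definition paramset :: "nat \<Rightarrow> real \<Rightarrow> real \<Rightarrow> (nat \<Rightarrow> real^'n^'m) set" where
  "paramset H \<kappa> \<gamma> = {M. \<forall>i\<in>{1..H}.
     inftynorm (M i) \<le> 2 * sqrt (real CARD('n)) * \<kappa>^3 * (1 - \<gamma>)^(i-1)}"

text \<open>\<open>Phi_x A B K H Ms t k\<close> = \<open>\<Phi>^x_k(M_{t-H:t-1})\<close>, with \<open>A_K = A - B K\<close>;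
  \<open>Ms s i\<close> is \<open>M_s^{[i]}\<close>.\<close>
definition Phi_x :: "real^'n^'n \<Rightarrow> real^'m^'n \<Rightarrow> real^'n^'m \<Rightarrow> nat \<Rightarrow>
    (int \<Rightarrow> nat \<Rightarrow> real^'n^'m) \<Rightarrow> int \<Rightarrow> nat \<Rightarrow> real^'n^'n" where
  "Phi_x A B K H Ms t k =
     (if k \<le> H then matpow (A - B ** K) (k - 1) else 0) +
     (\<Sum>i=1..H. if 1 \<le> int k - int i \<and> int k - int i \<le> int H
                 then matpow (A - B ** K) (i - 1) ** B ** Ms (t - int i) (k - i) else 0)"

definition Phi_u :: "real^'n^'n \<Rightarrow> real^'m^'n \<Rightarrow> real^'n^'m \<Rightarrow> nat \<Rightarrow>
    (int \<Rightarrow> nat \<Rightarrow> real^'n^'m) \<Rightarrow> int \<Rightarrow> nat \<Rightarrow> real^'n^'m" where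
  "Phi_u A B K H Ms t k =
     (if k \<le> H then Ms t k else 0) - K ** Phi_x A B K H Ms t k"

text \<open>\<open>g^x_i\<close> and \<open>g^u_j\<close>; row \<open>D_{x,i}^T\<close> is \<open>Dx $ i\<close>.\<close>
definition g_x :: "real \<Rightarrow> real^'n^'kx \<Rightarrow> real^'n^'n \<Rightarrow> real^'m^'n \<Rightarrow> real^'n^'m \<Rightarrow> nat \<Rightarrow>
    (int \<Rightarrow> nat \<Rightarrow> real^'n^'m) \<Rightarrow> int \<Rightarrow> 'kx \<Rightarrow> real" where
  "g_x wbar Dx A B K H Ms t i =
     wbar * (\<Sum>k=1..2*H. norm1 ((Dx $ i) v* Phi_x A B K H Ms t k))"

definition g_u :: "real \<Rightarrow> real^'m^'ku \<Rightarrow> real^'n^'n \<Rightarrow> real^'m^'n \<Rightarrow> real^'n^'m \<Rightarrow> nat \<Rightarrow>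
    (int \<Rightarrow> nat \<Rightarrow> real^'n^'m) \<Rightarrow> int \<Rightarrow> 'ku \<Rightarrow> real" where
  "g_u wbar Du A B K H Ms t j =
     wbar * (\<Sum>k=1..2*H. norm1 ((Du $ j) v* Phi_u A B K H Ms t k))"

end

theory Submission
  imports Defs
begin

(* Both g's are wbar times sums of 1-norms of D Phi_k, so by the reverse triangle
   inequality their differences are bounded by the 1-norms of the differences of the Phi_k,
   which are linear in the parameter differences.  For Phi^x that difference is the
   truncated convolution of A_K^(i-1) B with the parameter differences; strong stability
   gives |A_K^(i-1) B|_2 <= kappa^2 (1 - gamma)^(i-1) kappa_B, while
   |d^T X|_1 <= |d|_1 sqrt n |X|_2 <= |d|_1 sqrt n |X|_F, and Cauchy-Schwarz turns the sum
   of the H Frobenius norms of a parameter into sqrt H times its norm.  Phi^u adds the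
   current parameter difference and multiplies the Phi^x difference by K, one more factor
   kappa. *)

lemma specnorm_nonneg: "0 \<le> specnorm (X::real^'c^'r)"
  unfolding specnorm_def by (rule onorm_pos_le) simp

lemma norm_matrix_vector_le_specnorm: "norm (X *v x) \<le> specnorm (X::real^'c^'r) * norm x"
  unfolding specnorm_def by (rule onorm) simp

lemma specnorm_matrix_mul_le:
  "specnorm ((X::real^'c^'r) ** (Y::real^'d^'c)) \<le> specnorm X * specnorm Y"
proof -
  have "(\<lambda>x. (X ** Y) *v x) = (\<lambda>x. X *v x) \<circ> (\<lambda>x. Y *v x)"
    by (auto simp: matrix_vector_mul_assoc)
  then show ?thesis
    unfolding specnorm_def by (metis onorm_compose matrix_vector_mul_bounded_linear)
qed

lemma specnorm_mat_1_le: "specnorm (mat 1 :: real^'n^'n) \<le> 1"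
proof -
  have "(\<lambda>x. (mat 1 :: real^'n^'n) *v x) = (\<lambda>x. x)"
    by simp
  then show ?thesis
    unfolding specnorm_def by (metis onorm_id_le)
qed

lemma specnorm_le_frobnorm: "specnorm (X::real^'c^'r) \<le> frobnorm X"
  unfolding specnorm_def
proof (rule onorm_le)
  have norm_sq: "norm (v::real^'a) ^ 2 = (\<Sum>j\<in>UNIV. (v $ j)^2)" for v
    unfolding norm_vec_def L2_set_def by (simp add: sum_nonneg)
  fix x
  have "norm (X *v x) ^ 2 = (\<Sum>i\<in>UNIV. (inner (X $ i) x)^2)"
    by (simp add: norm_sq matrix_mult_dot)
  also have "\<dots> \<le> (\<Sum>i\<in>UNIV. (norm (X $ i))^2 * (norm x)^2)"
    by (rule sum_mono) (use Cauchy_Schwarz_ineq in \<open>simp add: power2_norm_eq_inner\<close>)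
  also have "\<dots> = (frobnorm X * norm x)^2"
    by (simp add: frobnorm_def power_mult_distrib norm_sq sum_distrib_right sum_nonneg)
  finally show "norm (X *v x) \<le> frobnorm X * norm x"
    by (rule power2_le_imp_le) (simp add: frobnorm_def sum_nonneg)
qed

lemma norm_row_le_specnorm: "norm ((X::real^'c^'r) $ l) \<le> specnorm X"
proof (cases "X $ l = 0")
  case True
  then show ?thesis by (simp add: specnorm_nonneg)
next
  case False
  have "norm (X $ l) * norm (X $ l) = (X *v (X $ l)) $ l"
    by (simp add: matrix_mult_dot power2_norm_eq_inner flip: power2_eq_square)
  also have "\<dots> \<le> norm (X *v (X $ l))"
    by (metis abs_ge_self component_le_norm_cart order_trans)
  also have "\<dots> \<le> specnorm X * norm (X $ l)"
    by (rule norm_matrix_vector_le_specnorm)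
  finally show ?thesis
    using False by simp
qed

lemma norm1_nonneg: "0 \<le> norm1 x"
  by (simp add: norm1_def sum_nonneg)

lemma norm1_le_sqrt_card_norm: "norm1 (x::real^'c) \<le> sqrt (real CARD('c)) * norm x"
proof -
  have "norm1 x = inner (\<chi> j. \<bar>x $ j\<bar>) ((\<chi> j. 1) :: real^'c)"
    by (simp add: norm1_def inner_vec_def)
  also have "\<dots> \<le> norm (\<chi> j. \<bar>x $ j\<bar>) * norm ((\<chi> j. 1) :: real^'c)"
    by (rule norm_cauchy_schwarz)
  also have "\<dots> = norm x * sqrt (real CARD('c))"
    by (simp add: norm_vec_def L2_set_constant)
  finally show ?thesis
    by (simp add: mult.commute)
qed

lemma norm1_vector_matrix_le:
  "norm1 ((d::real^'r) v* (X::real^'c^'r)) \<le> norm1 d * sqrt (real CARD('c)) * specnorm X"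
proof -
  have "norm1 (d v* X) \<le> (\<Sum>j\<in>UNIV. \<Sum>l\<in>UNIV. \<bar>d $ l\<bar> * \<bar>X $ l $ j\<bar>)"
    unfolding norm1_def vector_matrix_mult_def
    by (simp add: sum_mono abs_mult order_trans[OF sum_abs])
  also have "\<dots> = (\<Sum>l\<in>UNIV. \<bar>d $ l\<bar> * norm1 (X $ l))"
    by (subst sum.swap) (simp add: norm1_def sum_distrib_left)
  also have "\<dots> \<le> (\<Sum>l\<in>UNIV. \<bar>d $ l\<bar> * (sqrt (real CARD('c)) * specnorm X))"
    by (intro sum_mono mult_left_mono order_trans[OF norm1_le_sqrt_card_norm]
        mult_left_mono[OF norm_row_le_specnorm]) simp_all
  also have "\<dots> = norm1 d * sqrt (real CARD('c)) * specnorm X"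
    by (simp add: norm1_def sum_distrib_right mult.assoc)
  finally show ?thesis .
qed

lemma norm1_diff_le: "norm1 (x - y) \<le> norm1 x + norm1 (y::real^'c)"
  unfolding norm1_def by (simp add: sum.distrib[symmetric] sum_mono abs_triangle_ineq4)

lemma abs_norm1_diff_le: "\<bar>norm1 x - norm1 (y::real^'c)\<bar> \<le> norm1 (x - y)"
  unfolding norm1_def abs_le_iff sum_subtractf[symmetric]
  by (auto intro!: sum_mono simp: abs_triangle_ineq2 abs_triangle_ineq3 simp flip: sum_negf)

lemma norm1_sum_le: "norm1 (\<Sum>i\<in>S. f i) \<le> (\<Sum>i\<in>S. norm1 (f i::real^'c))"
proof (induction S rule: infinite_finite_induct)
  case (insert x F)
  have "norm1 (f x + sum f F) \<le> norm1 (f x) + norm1 (sum f F)"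
    unfolding norm1_def by (simp add: sum.distrib[symmetric] sum_mono abs_triangle_ineq)
  with insert show ?case by simp
qed (simp_all add: norm1_def)

lemma norm1_row_le_inftynorm: "norm1 (D $ i) \<le> inftynorm (D::real^'c^'r)"
  unfolding inftynorm_def norm1_def by (rule Max_ge) auto

lemma matpow_0 [simp]: "matpow A 0 = mat 1"
  by (simp add: matpow_def)

lemma matpow_Suc [simp]: "matpow A (Suc k) = A ** matpow A k"
  by (simp add: matpow_def)

lemma matpow_similar:
  assumes "Q ** Qi = mat 1" and "Qi ** Q = mat 1"
  shows "matpow (Qi ** L ** Q :: real^'n^'n) k = Qi ** matpow L k ** Q"
proof (induction k)
  case 0
  then show ?case using assms(2) by simp
next
  case (Suc k)
  have "matpow (Qi ** L ** Q) (Suc k) = Qi ** L ** (Q ** Qi) ** matpow L k ** Q"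
    using Suc by (simp add: matrix_mul_assoc)
  then show ?case
    using assms(1) by (simp add: matrix_mul_assoc)
qed

lemma specnorm_matpow_le: "specnorm (matpow (L::real^'n^'n) k) \<le> specnorm L ^ k"
proof (induction k)
  case 0
  then show ?case by (simp add: specnorm_mat_1_le)
next
  case (Suc k)
  have "specnorm (matpow L (Suc k)) \<le> specnorm L * specnorm (matpow L k)"
    by (simp add: specnorm_matrix_mul_le)
  also have "\<dots> \<le> specnorm L * specnorm L ^ k"
    by (rule mult_left_mono[OF Suc specnorm_nonneg])
  finally show ?case by simp
qed

lemma strongly_stable_bounds:
  fixes A :: "real^'n^'n"
  assumes "strongly_stable A B \<kappa> \<gamma> K"
  shows "specnorm K \<le> \<kappa>" and "0 \<le> \<kappa>" and "\<gamma> \<le> 1"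
    and "specnorm (matpow (A - B ** K) j) \<le> \<kappa>^2 * (1 - \<gamma>)^j"
proof -
  from assms obtain Q L :: "real^'n^'n" where Q_inv: "invertible Q"
    and AK: "A - B ** K = matrix_inv Q ** L ** Q" and L: "specnorm L \<le> 1 - \<gamma>"
    and Q: "specnorm Q \<le> \<kappa>" and Qi: "specnorm (matrix_inv Q) \<le> \<kappa>" and K: "specnorm K \<le> \<kappa>"
    unfolding strongly_stable_def by blast
  have "Q ** matrix_inv Q = mat 1 \<and> matrix_inv Q ** Q = mat 1"
    using Q_inv unfolding invertible_def matrix_inv_def by (rule someI_ex)
  then have QQi: "Q ** matrix_inv Q = mat 1" and QiQ: "matrix_inv Q ** Q = mat 1"
    by simp_all
  show "specnorm K \<le> \<kappa>" by (fact K)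
  show \<kappa>: "0 \<le> \<kappa>" using Q specnorm_nonneg order_trans by blast
  show \<gamma>: "\<gamma> \<le> 1" using L specnorm_nonneg[of L] by linarith
  have "specnorm (matpow (A - B ** K) j)
      \<le> specnorm (matrix_inv Q) * specnorm (matpow L j) * specnorm Q"
    unfolding AK matpow_similar[OF QQi QiQ]
    by (meson order_trans specnorm_matrix_mul_le specnorm_nonneg mult_right_mono)
  also have "\<dots> \<le> \<kappa> * (1 - \<gamma>)^j * \<kappa>"
    using specnorm_matpow_le[of L j] power_mono[OF L specnorm_nonneg, of j] \<gamma>
    by (intro mult_mono Qi Q) (auto intro: specnorm_nonneg \<kappa> order_trans mult_nonneg_nonneg)
  finally show "specnorm (matpow (A - B ** K) j) \<le> \<kappa>^2 * (1 - \<gamma>)^j"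
    by (simp add: power2_eq_square mult_ac)
qed

lemma strongly_stable_specnorm_response_le:
  assumes "strongly_stable A B \<kappa> \<gamma> K"
  shows "specnorm (matpow (A - B ** K) j ** B ** X) \<le> \<kappa>^2 * (1 - \<gamma>)^j * kappaB B * frobnorm X"
proof -
  have "specnorm (matpow (A - B ** K) j ** B ** X)
      \<le> specnorm (matpow (A - B ** K) j) * specnorm B * specnorm X"
    by (meson order_trans specnorm_matrix_mul_le specnorm_nonneg mult_right_mono)
  also have "\<dots> \<le> \<kappa>^2 * (1 - \<gamma>)^j * kappaB B * frobnorm X"
    using strongly_stable_bounds[OF assms]
    by (intro mult_mono) (auto simp: kappaB_def specnorm_le_frobnorm specnorm_nonneg)
  finally show ?thesis .
qed

lemma matrix_mul_sum:
  "(X::real^'b^'a) ** (\<Sum>i\<in>S. f i) = (\<Sum>i\<in>S. X ** (f i::real^'c^'b))"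
  by (induction S rule: infinite_finite_induct) (auto simp: matrix_add_ldistrib)

lemma vector_matrix_mult_sum:
  "(d::real^'a) v* (\<Sum>i\<in>S. f i) = (\<Sum>i\<in>S. d v* (f i::real^'c^'a))"
  by (induction S rule: infinite_finite_induct) (auto simp: vector_matrix_mult_add_rdistrib)

lemma matrix_mul_diff: "(X::real^'b^'a) ** (Y - Z) = X ** Y - X ** (Z::real^'c^'b)"
  by (metis matrix_add_ldistrib diff_add_cancel add_diff_cancel)

text \<open>\<open>conv_trunc H T k\<close> is \<open>\<Sum>{T i j | 1 \<le> i, j \<le> H, i + j = k}\<close>, the shape of
  the second summand of \<open>Phi_x\<close>.\<close>
definition conv_trunc :: "nat \<Rightarrow> (nat \<Rightarrow> nat \<Rightarrow> 'a::comm_monoid_add) \<Rightarrow> nat \<Rightarrow> 'a" where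
  "conv_trunc H T k =
     (\<Sum>i=1..H. if 1 \<le> int k - int i \<and> int k - int i \<le> int H then T i (k - i) else 0)"

lemma sum_conv_trunc: "(\<Sum>k=1..2*H. conv_trunc H T k) = (\<Sum>i=1..H. \<Sum>j=1..H. T i j)"
proof -
  have "(\<Sum>k=1..2*H. if 1 \<le> int k - int i \<and> int k - int i \<le> int H then T i (k - i) else 0)
      = (\<Sum>j=1..H. T i j)" if "i \<in> {1..H}" for i
  proof -
    have "{k \<in> {1..2*H}. 1 \<le> int k - int i \<and> int k - int i \<le> int H} = {1 + i..H + i}"
      using that by auto
    then show ?thesis
      by (simp only: sum.inter_filter[symmetric] finite_atLeastAtMost
          sum.shift_bounds_cl_nat_ivl[of "\<lambda>k. T i (k - i)"]) simp
  qed
  then show ?thesis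
    unfolding conv_trunc_def by (subst sum.swap) simp
qed

lemma matrix_mul_conv_trunc:
  "(X::real^'b^'a) ** conv_trunc H T k = conv_trunc H (\<lambda>i j. X ** (T i j::real^'c^'b)) k"
  unfolding conv_trunc_def matrix_mul_sum by (intro sum.cong) auto

lemma norm1_vector_matrix_conv_trunc_le:
  "norm1 ((d::real^'a) v* conv_trunc H T k)
     \<le> conv_trunc H (\<lambda>i j. norm1 (d v* (T i j::real^'c^'a))) k"
  unfolding conv_trunc_def vector_matrix_mult_sum
  by (rule order_trans[OF norm1_sum_le]) (simp add: sum_mono norm1_def)

lemma paramnorm_nonneg: "0 \<le> paramnorm H M"
  by (simp add: paramnorm_def sum_nonneg)

lemma sum_frobnorm_le_sqrt_paramnorm:
  "(\<Sum>j=1..H. frobnorm (E j)) \<le> sqrt (real H) * paramnorm H E"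
proof -
  have "(\<Sum>j=1..H. frobnorm (E j) * 1)\<^sup>2 \<le> (\<Sum>j=1..H. (frobnorm (E j))\<^sup>2) * (\<Sum>j=1..H. 1\<^sup>2)"
    by (rule Cauchy_Schwarz_ineq_sum)
  then have "(\<Sum>j=1..H. frobnorm (E j)) \<le> sqrt ((\<Sum>j=1..H. (frobnorm (E j))\<^sup>2) * real H)"
    by (intro real_le_rsqrt) simp
  then show ?thesis
    by (simp add: paramnorm_def real_sqrt_mult mult.commute)
qed

lemma sum_norm1_conv_trunc_le:
  fixes d :: "real^'r" and T :: "nat \<Rightarrow> nat \<Rightarrow> real^'c^'r"
  assumes T: "\<And>i j. specnorm (T i j) \<le> b i * frobnorm (E i j)" and b: "\<And>i. 0 \<le> b i"
  shows "(\<Sum>k=1..2*H. norm1 (d v* conv_trunc H T k))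
     \<le> norm1 d * sqrt (real CARD('c)) * sqrt (real H) * (\<Sum>i=1..H. b i * paramnorm H (E i))"
proof -
  let ?c = "norm1 d * sqrt (real CARD('c))"
  have "(\<Sum>k=1..2*H. norm1 (d v* conv_trunc H T k))
      \<le> (\<Sum>k=1..2*H. conv_trunc H (\<lambda>i j. norm1 (d v* T i j)) k)"
    by (intro sum_mono norm1_vector_matrix_conv_trunc_le)
  also have "\<dots> = (\<Sum>i=1..H. \<Sum>j=1..H. norm1 (d v* T i j))"
    by (rule sum_conv_trunc)
  also have "\<dots> \<le> (\<Sum>i=1..H. \<Sum>j=1..H. ?c * b i * frobnorm (E i j))"
    using T norm1_nonneg[of d]
    by (intro sum_mono order_trans[OF norm1_vector_matrix_le])
       (simp add: mult.assoc mult_left_mono)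
  also have "\<dots> = (\<Sum>i=1..H. ?c * b i * (\<Sum>j=1..H. frobnorm (E i j)))"
    by (simp add: sum_distrib_left)
  also have "\<dots> \<le> (\<Sum>i=1..H. ?c * b i * (sqrt (real H) * paramnorm H (E i)))"
    using b norm1_nonneg[of d]
    by (intro sum_mono mult_left_mono sum_frobnorm_le_sqrt_paramnorm) simp
  also have "\<dots> = ?c * sqrt (real H) * (\<Sum>i=1..H. b i * paramnorm H (E i))"
    by (simp add: sum_distrib_left mult_ac)
  finally show ?thesis .
qed

lemma Phi_x_diff:
  "Phi_x A B K H Ms t k - Phi_x A B K H Mt t k =
     conv_trunc H
       (\<lambda>i j. matpow (A - B ** K) (i - 1) ** B ** (Ms (t - int i) j - Mt (t - int i) j)) k"
  unfolding Phi_x_def conv_trunc_def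
  by (simp add: sum_subtractf[symmetric]) (intro sum.cong refl, simp add: matrix_mul_diff)

lemma Phi_u_diff:
  "Phi_u A B K H Ms t k - Phi_u A B K H Mt t k =
     (if k \<le> H then Ms t k - Mt t k else 0)
     - conv_trunc H
         (\<lambda>i j. K ** (matpow (A - B ** K) (i - 1) ** B ** (Ms (t - int i) j - Mt (t - int i) j))) k"
proof -
  have "Phi_u A B K H Ms t k - Phi_u A B K H Mt t k =
      (if k \<le> H then Ms t k - Mt t k else 0) - K ** (Phi_x A B K H Ms t k - Phi_x A B K H Mt t k)"
    unfolding Phi_u_def by (simp add: matrix_mul_diff algebra_simps)
  then show ?thesis
    by (simp only: Phi_x_diff matrix_mul_conv_trunc)
qed

lemma sum_norm1_Phi_x_diff_le:
  fixes A :: "real^'n^'n" and d :: "real^'n"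
  assumes "strongly_stable A B \<kappa> \<gamma> K"
  shows "(\<Sum>k=1..2*H. norm1 (d v* (Phi_x A B K H Ms t k - Phi_x A B K H Mt t k)))
    \<le> norm1 d * sqrt (real CARD('n)) * sqrt (real H) * (\<kappa>^2 * kappaB B)
       * (\<Sum>i=1..H. (1 - \<gamma>)^(i - 1) * paramnorm H (\<lambda>l. Ms (t - int i) l - Mt (t - int i) l))"
proof -
  note bounds = strongly_stable_bounds[OF assms]
  have "(\<Sum>k=1..2*H. norm1 (d v* (Phi_x A B K H Ms t k - Phi_x A B K H Mt t k)))
    \<le> norm1 d * sqrt (real CARD('n)) * sqrt (real H)
       * (\<Sum>i=1..H. \<kappa>^2 * (1 - \<gamma>)^(i - 1) * kappaB B
                    * paramnorm H (\<lambda>l. Ms (t - int i) l - Mt (t - int i) l))"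
    unfolding Phi_x_diff
    using bounds
    by (intro sum_norm1_conv_trunc_le strongly_stable_specnorm_response_le[OF assms])
      (simp add: kappaB_def)
  then show ?thesis
    by (simp add: sum_distrib_left mult_ac)
qed

lemma sum_norm1_Phi_u_diff_le:
  fixes A :: "real^'n^'n" and d :: "real^'m"
  assumes "strongly_stable A B \<kappa> \<gamma> K"
  shows "(\<Sum>k=1..2*H. norm1 (d v* (Phi_u A B K H Ms t k - Phi_u A B K H Mt t k)))
    \<le> norm1 d * sqrt (real CARD('n)) * sqrt (real H)
       * (paramnorm H (\<lambda>l. Ms t l - Mt t l) + \<kappa>^3 * kappaB B
          * (\<Sum>i=1..H. (1 - \<gamma>)^(i - 1) * paramnorm H (\<lambda>l. Ms (t - int i) l - Mt (t - int i) l)))"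
proof -
  note bounds = strongly_stable_bounds[OF assms]
  let ?c = "norm1 d * sqrt (real CARD('n))"
  let ?\<Delta> = "\<lambda>s l. Ms s l - Mt s l"
  let ?R = "\<lambda>i j. K ** (matpow (A - B ** K) (i - 1) ** B ** ?\<Delta> (t - int i) j)"
  let ?b = "\<lambda>i. \<kappa> * (\<kappa>^2 * (1 - \<gamma>)^(i - 1) * kappaB B)"
  have current: "(\<Sum>k=1..2*H. norm1 (d v* (if k \<le> H then ?\<Delta> t k else 0)))
      \<le> ?c * sqrt (real H) * paramnorm H (?\<Delta> t)"
  proof -
    have "(\<Sum>k=1..2*H. norm1 (d v* (if k \<le> H then ?\<Delta> t k else 0)))
        = (\<Sum>k=1..H. norm1 (d v* ?\<Delta> t k))"
      by (rule sum.mono_neutral_cong_right) (auto simp: norm1_def)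
    also have "\<dots> \<le> (\<Sum>k=1..H. ?c * frobnorm (?\<Delta> t k))"
      using norm1_nonneg[of d]
      by (intro sum_mono order_trans[OF norm1_vector_matrix_le] mult_left_mono
          specnorm_le_frobnorm) simp
    also have "\<dots> \<le> ?c * (sqrt (real H) * paramnorm H (?\<Delta> t))"
      using norm1_nonneg[of d]
      unfolding sum_distrib_left[symmetric]
      by (intro mult_left_mono sum_frobnorm_le_sqrt_paramnorm) simp
    finally show ?thesis by (simp add: mult_ac)
  qed
  have response: "specnorm (K ** (matpow (A - B ** K) (i - 1) ** B ** X)) \<le> ?b i * frobnorm X"
    for i X
    using order_trans[OF specnorm_matrix_mul_le mult_mono[OF bounds(1)
          strongly_stable_specnorm_response_le[OF assms] bounds(2) specnorm_nonneg]]
    by (simp add: mult.assoc)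
  have past: "(\<Sum>k=1..2*H. norm1 (d v* conv_trunc H ?R k))
      \<le> ?c * sqrt (real H) * (\<Sum>i=1..H. ?b i * paramnorm H (?\<Delta> (t - int i)))"
    using bounds by (intro sum_norm1_conv_trunc_le response) (simp add: kappaB_def)
  have "(\<Sum>k=1..2*H. norm1 (d v* (Phi_u A B K H Ms t k - Phi_u A B K H Mt t k)))
      \<le> (\<Sum>k=1..2*H. norm1 (d v* (if k \<le> H then ?\<Delta> t k else 0)))
        + (\<Sum>k=1..2*H. norm1 (d v* conv_trunc H ?R k))"
    unfolding Phi_u_diff vector_matrix_mult_diff_rdistrib sum.distrib[symmetric]
    by (intro sum_mono norm1_diff_le)
  also have "\<dots> \<le> ?c * sqrt (real H) * paramnorm H (?\<Delta> t)
      + ?c * sqrt (real H) * (\<Sum>i=1..H. ?b i * paramnorm H (?\<Delta> (t - int i)))"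
    by (rule add_mono[OF current past])
  finally show ?thesis
    by (simp add: sum_distrib_left distrib_left mult_ac power3_eq_cube power2_eq_square)
qed

lemma abs_weighted_sum_norm1_diff_le:
  assumes "0 \<le> w"
  shows "\<bar>w * (\<Sum>k\<in>S. norm1 (d v* X k)) - w * (\<Sum>k\<in>S. norm1 (d v* Y k))\<bar>
    \<le> w * (\<Sum>k\<in>S. norm1 ((d::real^'r) v* (X k - Y k::real^'c^'r)))"
proof -
  have "\<bar>(\<Sum>k\<in>S. norm1 (d v* X k)) - (\<Sum>k\<in>S. norm1 (d v* Y k))\<bar>
      \<le> (\<Sum>k\<in>S. norm1 (d v* (X k - Y k)))"
    unfolding sum_subtractf[symmetric] vector_matrix_mult_diff_rdistrib
    by (rule order_trans[OF sum_abs sum_mono[OF abs_norm1_diff_le]])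
  then show ?thesis
    using assms by (simp add: abs_mult mult_left_mono flip: right_diff_distrib)
qed

lemma sum_pow_max_pred_split:
  "(\<Sum>k=0..H. (x::real)^(nat (max (int k - 1) 0)) * f k) = f 0 + (\<Sum>k=1..H. x^(k - 1) * f k)"
  by (simp add: sum.atLeast_Suc_atMost[of 0 H] atLeastSucAtMost_greaterThanAtMost nat_diff_distrib)

lemma g_x_lipschitz:
  fixes A :: "real^'n^'n"
  assumes "0 \<le> wbar" and "1 \<le> \<kappa>" and "strongly_stable A B \<kappa> \<gamma> K" and "norm1 (Dx $ i) \<le> c"
  shows "\<bar>g_x wbar Dx A B K H Ms t i - g_x wbar Dx A B K H Mt t i\<bar>
    \<le> wbar * sqrt (real CARD('n)) * c * \<kappa>^3 * kappaB B * sqrt (real H)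
       * (\<Sum>k=1..H. (1 - \<gamma>)^(k - 1) * paramnorm H (\<lambda>l. Ms (t - int k) l - Mt (t - int k) l))"
proof -
  let ?S = "\<Sum>k=1..H. (1 - \<gamma>)^(k - 1) * paramnorm H (\<lambda>l. Ms (t - int k) l - Mt (t - int k) l)"
  let ?C = "wbar * sqrt (real CARD('n)) * sqrt (real H) * kappaB B * ?S"
  have "0 \<le> ?C"
    using assms(1) strongly_stable_bounds(3)[OF assms(3)]
    by (simp add: kappaB_def sum_nonneg paramnorm_nonneg)
  moreover have "norm1 (Dx $ i) * \<kappa>^2 \<le> c * \<kappa>^3"
    using assms(2,4) norm1_nonneg[of "Dx $ i"] by (intro mult_mono) (auto simp: power_increasing)
  ultimately have factor: "norm1 (Dx $ i) * \<kappa>^2 * ?C \<le> c * \<kappa>^3 * ?C"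
    by (rule mult_right_mono[rotated])
  have "\<bar>g_x wbar Dx A B K H Ms t i - g_x wbar Dx A B K H Mt t i\<bar>
      \<le> wbar * (\<Sum>k=1..2*H. norm1 (Dx $ i v* (Phi_x A B K H Ms t k - Phi_x A B K H Mt t k)))"
    unfolding g_x_def by (rule abs_weighted_sum_norm1_diff_le[OF assms(1)])
  also have "\<dots> \<le> wbar * (norm1 (Dx $ i) * sqrt (real CARD('n)) * sqrt (real H)
      * (\<kappa>^2 * kappaB B) * ?S)"
    by (intro mult_left_mono sum_norm1_Phi_x_diff_le assms(1,3))
  also have "\<dots> = norm1 (Dx $ i) * \<kappa>^2 * ?C"
    by (simp add: mult_ac)
  finally show ?thesis
    using factor by (simp add: mult_ac)
qed

lemma g_u_lipschitz:
  fixes A :: "real^'n^'n"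
  assumes "0 \<le> wbar" and "1 \<le> \<kappa>" and "strongly_stable A B \<kappa> \<gamma> K" and "norm1 (Du $ j) \<le> c"
  shows "\<bar>g_u wbar Du A B K H Ms t j - g_u wbar Du A B K H Mt t j\<bar>
    \<le> wbar * sqrt (real CARD('n)) * c * \<kappa>^3 * kappaB B * sqrt (real H)
       * (\<Sum>k=0..H. (1 - \<gamma>)^(nat (max (int k - 1) 0))
            * paramnorm H (\<lambda>l. Ms (t - int k) l - Mt (t - int k) l))"
proof -
  let ?pn = "\<lambda>s. paramnorm H (\<lambda>l. Ms s l - Mt s l)"
  let ?S = "\<Sum>k=1..H. (1 - \<gamma>)^(k - 1) * ?pn (t - int k)"
  let ?C = "wbar * sqrt (real CARD('n)) * sqrt (real H)"
  have S_nonneg: "0 \<le> ?S"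
    using strongly_stable_bounds(3)[OF assms(3)] by (simp add: sum_nonneg paramnorm_nonneg)
  have \<kappa>B: "1 \<le> \<kappa>^3 * kappaB B"
    using one_le_power[OF assms(2), of 3] mult_mono[of 1 "\<kappa>^3" 1 "kappaB B"] assms(2)
    by (simp add: kappaB_def)
  have "?pn t + \<kappa>^3 * kappaB B * ?S \<le> \<kappa>^3 * kappaB B * (?pn t + ?S)"
    using mult_right_mono[OF \<kappa>B paramnorm_nonneg] by (simp add: distrib_left)
  then have "norm1 (Du $ j) * (?pn t + \<kappa>^3 * kappaB B * ?S) \<le> c * (\<kappa>^3 * kappaB B * (?pn t + ?S))"
    using assms(2,4) norm1_nonneg[of "Du $ j"] S_nonneg paramnorm_nonneg
    by (intro mult_mono add_nonneg_nonneg mult_nonneg_nonneg) (auto simp: kappaB_def)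
  then have "?C * (norm1 (Du $ j) * (?pn t + \<kappa>^3 * kappaB B * ?S))
      \<le> ?C * (c * (\<kappa>^3 * kappaB B * (?pn t + ?S)))"
    using assms(1) by (intro mult_left_mono) simp_all
  then have factor: "?C * (norm1 (Du $ j) * (?pn t + \<kappa>^3 * kappaB B * ?S))
      \<le> wbar * sqrt (real CARD('n)) * c * \<kappa>^3 * kappaB B * sqrt (real H)
         * (\<Sum>k=0..H. (1 - \<gamma>)^(nat (max (int k - 1) 0)) * ?pn (t - int k))"
    by (simp add: sum_pow_max_pred_split mult_ac)
  have "\<bar>g_u wbar Du A B K H Ms t j - g_u wbar Du A B K H Mt t j\<bar>
      \<le> wbar * (\<Sum>k=1..2*H. norm1 (Du $ j v* (Phi_u A B K H Ms t k - Phi_u A B K H Mt t k)))"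
    unfolding g_u_def by (rule abs_weighted_sum_norm1_diff_le[OF assms(1)])
  also have "\<dots> \<le> wbar * (norm1 (Du $ j) * sqrt (real CARD('n)) * sqrt (real H)
      * (?pn t + \<kappa>^3 * kappaB B * ?S))"
    by (intro mult_left_mono sum_norm1_Phi_u_diff_le assms(1,3))
  finally show ?thesis
    using factor by (simp add: mult_ac)
qed

theorem lemma16:
  fixes A :: "real^'n^'n" and B :: "real^'m^'n" and K :: "real^'n^'m"
    and Dx :: "real^'n^'kx" and Du :: "real^'m^'ku"
    and wbar \<kappa> \<gamma> :: real and H :: nat
    and Ms Mt :: "int \<Rightarrow> nat \<Rightarrow> real^'n^'m"
  assumes "wbar > 0" and "\<kappa> \<ge> 1" and "0 < \<gamma>" and "\<gamma> \<le> 1"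
    and "strongly_stable A B \<kappa> \<gamma> K"
    and "H \<ge> 1"
    and "\<And>s. Ms s \<in> paramset H \<kappa> \<gamma>"
    and "\<And>s. Mt s \<in> paramset H \<kappa> \<gamma>"
  defines "Lg \<equiv> wbar * sqrt (real CARD('n)) * max (inftynorm Dx) (inftynorm Du)
                 * \<kappa>^3 * kappaB B * sqrt (real H)"
  shows "\<forall>t. (\<forall>i. \<bar>g_x wbar Dx A B K H Ms t i - g_x wbar Dx A B K H Mt t i\<bar>
              \<le> Lg * (\<Sum>k=1..H. (1 - \<gamma>)^(k-1) * paramnorm H (\<lambda>l. Ms (t - int k) l - Mt (t - int k) l)))
          \<and> (\<forall>j. \<bar>g_u wbar Du A B K H Ms t j - g_u wbar Du A B K H Mt t j\<bar>
              \<le> Lg * (\<Sum>k=0..H. (1 - \<gamma>)^(nat (max (int k - 1) 0)) * paramnorm H (\<lambda>l. Ms (t - int k) l - Mt (t - int k) l)))"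
proof -
  have rows: "norm1 (Dx $ i) \<le> max (inftynorm Dx) (inftynorm Du)"
    "norm1 (Du $ j) \<le> max (inftynorm Dx) (inftynorm Du)" for i j
    by (simp_all add: norm1_row_le_inftynorm le_max_iff_disj)
  show ?thesis
    unfolding Lg_def
    by (intro allI conjI g_x_lipschitz g_u_lipschitz less_imp_le assms(1,2,5) rows)
qed

end
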